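(* Let $M=\begin{pmatrix}a&b\\c&d\end{pmatrix}$ and $M'=\begin{pmatrix}a'&b'\\c'&d'\end{pmatrix}$ be in $\mathrm{Mat}(2,\mathbb{Z})$ with $\det(M)=\det(M')$, $\mathrm{trace}(M)=\mathrm{trace}(M')$ and $\mathrm{mgcd}(M)=\mathrm{mgcd}(M')=r\in\mathbb{N}$. Then $r$ divides $d-d'$.
   Context: $\mathrm{mgcd}(M)=\gcd(b,c,d-a)\ge0$. *)

theory Defs
  imports "HOL-Analysis.Analysis"
begin

text \<open>For M = (a b; c d) in Mat(2,Z), mgcd(M) = gcd(b, c, d - a) (nonnegative).
  Index 1 is the first row/column, index 2 the second.\<close>
definition mgcd :: "int ^ 2 ^ 2 \<Rightarrow> int" where
  "mgcd M = gcd (M $ 1 $ 2) (gcd (M $ 2 $ 1) (M $ 2 $ 2 - M $ 1 $ 1))"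

end

theory Submission
  imports Defs
begin

text \<open>Write \<open>d - a = r x\<close>, \<open>b = r p\<close>, \<open>c = r q\<close>. The discriminant
  \<open>(a + d)\<^sup>2 - 4 det M = (d - a)\<^sup>2 + 4 b c = r\<^sup>2 (x\<^sup>2 + 4 p q)\<close> depends only on trace and
  determinant, so for \<open>r \<noteq> 0\<close> we get \<open>x\<^sup>2 \<equiv> x'\<^sup>2 (mod 4)\<close>, i.e. \<open>x \<equiv> x' (mod 2)\<close>.
  Since \<open>2 d = trace M + r x\<close>, this gives \<open>2 (d - d') = r (x - x') \<in> 2 r \<int>\<close>.\<close>

lemma discriminant_2x2:
  fixes a b c d :: "'a :: comm_ring_1"
  shows "(d - a)\<^sup>2 + 4 * (b * c) = (a + d)\<^sup>2 - 4 * (a * d - b * c)"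
  by (simp add: power2_eq_square algebra_simps)

lemma even_diff_if_squares_cong_mod_4:
  fixes x y :: int
  assumes "4 dvd x\<^sup>2 - y\<^sup>2"
  shows "even (x - y)"
proof (rule ccontr)
  assume odd: "odd (x - y)"
  then have "odd (x + y)" by presburger
  with odd have "odd ((x - y) * (x + y))" by simp
  moreover have "(x - y) * (x + y) = x\<^sup>2 - y\<^sup>2" by (simp add: power2_eq_square algebra_simps)
  ultimately have "odd (x\<^sup>2 - y\<^sup>2)" by simp
  moreover have "(2::int) dvd 4" by simp
  ultimately show False using assms dvd_trans by blast
qed

lemma dvd_diff_corners_if_same_trace_det:
  fixes a b c d a' b' c' d' r :: int
  assumes "r dvd b" "r dvd c" "r dvd d - a" "r dvd b'" "r dvd c'" "r dvd d' - a'"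
    and trace: "a + d = a' + d'"
    and det: "a * d - b * c = a' * d' - b' * c'"
  shows "r dvd d - d'"
proof (cases "r = 0")
  case True
  with assms(3,6) trace show ?thesis by simp
next
  case False
  obtain p q x where b: "b = r * p" and c: "c = r * q" and x: "d - a = r * x"
    using assms(1-3) by (metis dvdE)
  obtain p' q' x' where b': "b' = r * p'" and c': "c' = r * q'" and x': "d' - a' = r * x'"
    using assms(4-6) by (metis dvdE)
  have "r\<^sup>2 * (x\<^sup>2 + 4 * (p * q)) = (d - a)\<^sup>2 + 4 * (b * c)"
    using b c x by (simp add: power2_eq_square algebra_simps)
  also have "\<dots> = (d' - a')\<^sup>2 + 4 * (b' * c')"
    using trace det by (simp only: discriminant_2x2)
  also have "\<dots> = r\<^sup>2 * (x'\<^sup>2 + 4 * (p' * q'))"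
    using b' c' x' by (simp add: power2_eq_square algebra_simps)
  finally have "x\<^sup>2 + 4 * (p * q) = x'\<^sup>2 + 4 * (p' * q')"
    using False by (metis mult_left_cancel power_not_zero)
  then have "x\<^sup>2 - x'\<^sup>2 = 4 * (p' * q' - p * q)" by (simp add: algebra_simps)
  then obtain k where k: "x - x' = 2 * k"
    using even_diff_if_squares_cong_mod_4 by (metis dvd_triv_left evenE)
  have "2 * (d - d') = (a + d) + (d - a) - ((a' + d') + (d' - a'))" by simp
  also have "\<dots> = 2 * (r * k)" using trace x x' k by (simp add: algebra_simps)
  finally have "d - d' = r * k" by simp
  then show ?thesis by simp
qed

lemma mgcd_dvd_entries:
  shows "mgcd M dvd M $ 1 $ 2" "mgcd M dvd M $ 2 $ 1" "mgcd M dvd M $ 2 $ 2 - M $ 1 $ 1"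
  unfolding mgcd_def by (meson dvd_trans gcd_dvd1 gcd_dvd2)+

theorem lemma38:
  fixes M M' :: "int ^ 2 ^ 2" and r :: nat
  assumes "det M = det M'"
    and "trace M = trace M'"
    and "mgcd M = int r" and "mgcd M' = int r"
  shows "int r dvd (M $ 2 $ 2 - M' $ 2 $ 2)"
proof (rule dvd_diff_corners_if_same_trace_det)
  show "M $ 1 $ 1 + M $ 2 $ 2 = M' $ 1 $ 1 + M' $ 2 $ 2"
    using assms(2) by (simp add: trace_def sum_2)
  show "M $ 1 $ 1 * M $ 2 $ 2 - M $ 1 $ 2 * M $ 2 $ 1 = M' $ 1 $ 1 * M' $ 2 $ 2 - M' $ 1 $ 2 * M' $ 2 $ 1"
    using assms(1) by (simp add: det_2)
qed (use mgcd_dvd_entries[of M] mgcd_dvd_entries[of M'] assms(3,4) in simp_all)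

end
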